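(* Let $G=(V,E)$ be a graph with $|V|\ge d+1$, fix distinct vertices $v_1,\dots,v_d$ and the space $X_{G,d}$. Let $p\in X_{G,d}$ be such that $p(v_1),\dots,p(v_d)$ are affinely independent. Then the restriction of the linear map $R(G,p):(\mathbb{C}^d)^V\to\mathbb{C}^E$ to the linear subspace $X_{G,d}$ has rank $d|V|-\binom{d+1}{2}$ if and only if $(G,p)$ is infinitesimally rigid.
   Context: On $\mathbb{C}^d$ use $\|x\|^2=\sum x_i^2$ and the bilinear dot product $x\cdot y=\sum x_iy_i$. For a graph $G=(V,E)$ with at least $d+1$ vertices and a fixed sequence of distinct vertices $v_1,\dots,v_d$, define $X_{G,d}=\{p\in(\mathbb{C}^d)^V : p_j(v_k)=0 \text{ for all } 1\le k\le j\le d\}$, where $p_j(v)$ is the $j$-th coordinate of $p(v)$. The rigidity matrix $R(G,p)$ is the $|E|\times d|V|$ matrix whose row for edge $uv$ has $p(u)-p(v)$ in the $d$ columns of $u$, $p(v)-p(u)$ in the $d$ columns of $v$, and zeros elsewhere (it is the Jacobian at $p$ of $p\mapsto(\tfrac12\|p(v)-p(w)\|^2)_{vw\in E}$). The framework $(G,p)$ is infinitesimally rigid if $\operatorname{rank}R(G,p)=d|V|-\binom{d+1}{2}$, or $G=K_n$ with $n\le d+1$ and the points $p(v)$ affinely independent. *)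

theory Defs
  imports "HOL-Analysis.Analysis" "HOL-Library.Function_Algebras"
begin

text \<open>A (finite simple) graph is a finite vertex set V together with an edge set E of
  ordered pairs, each undirected edge listed once in some orientation (the orientation
  is irrelevant: the row of an edge only changes sign).
  A configuration p in (C^d)^V is a function p :: 'a => nat => complex, where p v i is
  the i-th coordinate (1 <= i <= d) of p(v); values outside V x {1..d} are ignored /
  required to be zero for elements of the ambient linear space.\<close>

definition simple_graph :: "'a set \<Rightarrow> ('a \<times> 'a) set \<Rightarrow> bool" where
  "simple_graph V E \<longleftrightarrow> finite V \<and> E \<subseteq> V \<times> V \<and> (\<forall>u. (u, u) \<notin> E)
     \<and> (\<forall>u v. (u, v) \<in> E \<longrightarrow> (v, u) \<notin> E)"

definition complete_graph :: "'a set \<Rightarrow> ('a \<times> 'a) set \<Rightarrow> bool" where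
  "complete_graph V E \<longleftrightarrow> (\<forall>u\<in>V. \<forall>v\<in>V. u \<noteq> v \<longrightarrow> (u, v) \<in> E \<or> (v, u) \<in> E)"

definition conf_space :: "nat \<Rightarrow> 'a set \<Rightarrow> ('a \<Rightarrow> nat \<Rightarrow> complex) set" where
  "conf_space d V = {q. \<forall>v i. (v \<notin> V \<or> i \<notin> {1..d}) \<longrightarrow> q v i = 0}"

definition X_space :: "nat \<Rightarrow> 'a set \<Rightarrow> (nat \<Rightarrow> 'a) \<Rightarrow> ('a \<Rightarrow> nat \<Rightarrow> complex) set" where
  "X_space d V vs = {q \<in> conf_space d V. \<forall>j k. 1 \<le> k \<and> k \<le> j \<and> j \<le> d \<longrightarrow> q (vs k) j = 0}"

definition rigidity_map :: "nat \<Rightarrow> ('a \<times> 'a) set \<Rightarrow> ('a \<Rightarrow> nat \<Rightarrow> complex)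
    \<Rightarrow> ('a \<Rightarrow> nat \<Rightarrow> complex) \<Rightarrow> ('a \<times> 'a \<Rightarrow> complex)" where
  "rigidity_map d E p q = (\<lambda>(u, v). if (u, v) \<in> E then
      (\<Sum>i=1..d. (p u i - p v i) * q u i + (p v i - p u i) * q v i) else 0)"

definition cscale :: "complex \<Rightarrow> ('b \<Rightarrow> complex) \<Rightarrow> ('b \<Rightarrow> complex)" where
  "cscale c f = (\<lambda>e. c * f e)"

definition rank_on :: "nat \<Rightarrow> ('a \<times> 'a) set \<Rightarrow> ('a \<Rightarrow> nat \<Rightarrow> complex)
    \<Rightarrow> ('a \<Rightarrow> nat \<Rightarrow> complex) set \<Rightarrow> nat" where
  "rank_on d E p S = vector_space.dim cscale (rigidity_map d E p ` S)"

definition aff_indep :: "nat \<Rightarrow> 'b set \<Rightarrow> ('b \<Rightarrow> nat \<Rightarrow> complex) \<Rightarrow> bool" where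
  "aff_indep d S x \<longleftrightarrow> (\<forall>c :: 'b \<Rightarrow> complex.
      (\<Sum>s\<in>S. c s) = 0 \<and> (\<forall>i\<in>{1..d}. (\<Sum>s\<in>S. c s * x s i) = 0) \<longrightarrow> (\<forall>s\<in>S. c s = 0))"

definition inf_rigid :: "nat \<Rightarrow> 'a set \<Rightarrow> ('a \<times> 'a) set \<Rightarrow> ('a \<Rightarrow> nat \<Rightarrow> complex) \<Rightarrow> bool" where
  "inf_rigid d V E p \<longleftrightarrow>
     int (rank_on d E p (conf_space d V)) = int d * int (card V) - int ((d + 1) choose 2)
     \<or> (complete_graph V E \<and> card V \<le> d + 1 \<and> aff_indep d V p)"

end

theory Submission
  imports Defs
begin

text \<open>
  Membership in \<open>X\<^sub>G\<^sub>,\<^sub>d\<close> puts \<open>p(v\<^sub>1), \<dots>, p(v\<^sub>d)\<close> in staircase form: \<open>p(v\<^sub>k)\<close> lives in the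
  first \<open>k - 1\<close> coordinates, and affine independence makes each pivot \<open>p(v\<^sub>k\<^sub>+\<^sub>1)\<^sub>k\<close> nonzero.
  Using the pivots, any \<open>q\<close> can be moved into \<open>X\<^sub>G\<^sub>,\<^sub>d\<close> by subtracting a translation and then,
  for \<open>n = 1, \<dots>, d - 1\<close>, an infinitesimal rotation mixing axis \<open>n\<close> with the later axes;
  trivial motions lie in the kernel of \<open>R(G,p)\<close>, so \<open>R(G,p)\<close> has the same image on
  \<open>X\<^sub>G\<^sub>,\<^sub>d\<close> as on all of \<open>(\<complex>\<^sup>d)\<^sup>V\<close>. This settles everything except the case \<open>G = K\<^sub>d\<^sub>+\<^sub>1\<close> with
  affinely independent points. There, appending the last vertex gives a staircase simplex, and
  the edge equations force every \<open>q \<in> X\<^sub>G\<^sub>,\<^sub>d\<close> with \<open>R(G,p) q = 0\<close> to vanish vertex by vertex; so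
  \<open>R(G,p)\<close> is injective on \<open>X\<^sub>G\<^sub>,\<^sub>d\<close>, whose dimension is \<open>d(d + 1) - (d + 1 choose 2)\<close>.
\<close>

section \<open>Staircase configurations\<close>

text \<open>The pivot of \<open>x\<^sub>k\<^sub>+\<^sub>1\<close> is its \<open>k\<close>-th coordinate, the last one it may occupy.\<close>
definition staircase :: "nat \<Rightarrow> (nat \<Rightarrow> nat \<Rightarrow> 'a::zero) \<Rightarrow> bool" where
  "staircase m x \<longleftrightarrow> (\<forall>k\<in>{1..m}. \<forall>j. j \<notin> {1..<k} \<longrightarrow> x k j = 0)"

lemma staircase_mono: "staircase m x \<Longrightarrow> n \<le> m \<Longrightarrow> staircase n x"
  unfolding staircase_def by auto

lemma staircase_span:
  fixes y :: "nat \<Rightarrow> nat \<Rightarrow> 'a::field"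
  assumes "staircase n y" and "\<forall>k\<in>{1..<n}. y (Suc k) k \<noteq> 0"
    and "\<forall>l. l \<notin> {1..<n} \<longrightarrow> x l = 0"
  shows "\<exists>c. \<forall>l. x l = (\<Sum>j\<in>{2..n}. c j * y j l)"
  using assms
proof (induction n arbitrary: x)
  case 0
  then show ?case by simp
next
  case (Suc n)
  show ?case
  proof (cases "n = 0")
    case True
    then show ?thesis using Suc.prems(3) by auto
  next
    case False
    define \<pi> where "\<pi> = y (Suc n) n"
    have "\<pi> \<noteq> 0" unfolding \<pi>_def using Suc.prems(2) False by auto
    define x' where "x' l = x l - x n / \<pi> * y (Suc n) l" for l
    have "x' l = 0" if "l \<notin> {1..<n}" for l
    proof (cases "l = n")
      case True
      then show ?thesis using \<open>\<pi> \<noteq> 0\<close> unfolding x'_def \<pi>_def by simp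
    next
      case False
      then have "l \<notin> {1..<Suc n}" using that by auto
      then show ?thesis using Suc.prems(1,3) unfolding x'_def staircase_def by simp
    qed
    then obtain c where c: "\<forall>l. x' l = (\<Sum>j\<in>{2..n}. c j * y j l)"
      using Suc.IH[of x'] Suc.prems(1,2) staircase_mono[of "Suc n" y n] by auto
    have "x l = (\<Sum>j\<in>{2..Suc n}. (c(Suc n := x n / \<pi>)) j * y j l)" for l
    proof -
      have "{2..Suc n} = insert (Suc n) {2..n}" using False by auto
      then have "(\<Sum>j\<in>{2..Suc n}. (c(Suc n := x n / \<pi>)) j * y j l)
          = x n / \<pi> * y (Suc n) l + (\<Sum>j\<in>{2..n}. c j * y j l)"
        by simp
      then show ?thesis
        using c[rule_format, of l] unfolding x'_def by (simp add: algebra_simps)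
    qed
    then show ?thesis by blast
  qed
qed

lemma staircase_orthogonal:
  fixes y :: "nat \<Rightarrow> nat \<Rightarrow> 'a::idom"
  assumes stair: "staircase (Suc n) y" and pivots: "\<forall>k\<in>{1..n}. y (Suc k) k \<noteq> 0"
    and "n \<le> d" and orth: "\<forall>j\<in>{2..Suc n}. (\<Sum>i\<in>{1..d}. y j i * z i) = 0"
  shows "\<forall>l\<in>{1..n}. z l = 0"
proof -
  have "z l = 0" if "l \<in> {1..n}" for l
    using that
  proof (induction l rule: less_induct)
    case (less l)
    have "(\<Sum>i\<in>{1..d}. y (Suc l) i * z i) = (\<Sum>i\<in>{l}. y (Suc l) i * z i)"
    proof (rule sum.mono_neutral_right)
      show "\<forall>i\<in>{1..d} - {l}. y (Suc l) i * z i = 0"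
      proof
        fix i assume i: "i \<in> {1..d} - {l}"
        then consider "i < l" | "l < i" by fastforce
        then show "y (Suc l) i * z i = 0"
        proof cases
          case 1
          then show ?thesis using less.IH[of i] less.prems i by simp
        next
          case 2
          then show ?thesis using stair less.prems unfolding staircase_def by simp
        qed
      qed
    qed (use less.prems \<open>n \<le> d\<close> in auto)
    then have "y (Suc l) l * z l = 0" using orth less.prems by auto
    then show ?case using pivots less.prems by auto
  qed
  then show ?thesis by blast
qed

lemma aff_indep_not_in_span:
  assumes "aff_indep d S x" and "finite S" and "b \<in> S" and "a \<in> S" and "a \<noteq> b"
    and "T \<subseteq> S - {a, b}" and "\<forall>i\<in>{1..d}. x b i = 0"
  shows "\<not> (\<forall>i\<in>{1..d}. x a i = (\<Sum>t\<in>T. c t * x t i))"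
proof
  assume span: "\<forall>i\<in>{1..d}. x a i = (\<Sum>t\<in>T. c t * x t i)"
  define e where "e s = (if s = a then -1 else if s = b then 1 - sum c T else if s \<in> T then c s else 0)"
    for s
  have finT: "finite T" using assms(2,6) finite_subset by blast
  have e_sum: "(\<Sum>s\<in>S. e s * g s) = - g a + (1 - sum c T) * g b + (\<Sum>t\<in>T. c t * g t)"
    for g :: "_ \<Rightarrow> complex"
  proof -
    have "(\<Sum>s\<in>S. e s * g s) = (\<Sum>s\<in>insert a (insert b T). e s * g s)"
      using assms(2-6) by (intro sum.mono_neutral_right) (auto simp: e_def)
    also have "\<dots> = e a * g a + e b * g b + (\<Sum>t\<in>T. e t * g t)"
      using assms(5,6) finT by (subst sum.insert; auto)+
    also have "(\<Sum>t\<in>T. e t * g t) = (\<Sum>t\<in>T. c t * g t)"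
      using assms(6) by (intro sum.cong) (auto simp: e_def)
    finally show ?thesis using assms(5) by (simp add: e_def)
  qed
  have "sum e S = 0" using e_sum[of "\<lambda>_. 1"] by simp
  moreover have "\<forall>i\<in>{1..d}. (\<Sum>s\<in>S. e s * x s i) = 0"
    using e_sum span assms(7) by simp
  ultimately have "e a = 0" using assms(1,4) unfolding aff_indep_def by blast
  then show False by (simp add: e_def)
qed

lemma aff_indep_staircase_pivots:
  assumes stair: "staircase m x" and aff: "aff_indep d {1..m} x"
  shows "\<forall>n\<in>{1..<m}. x (Suc n) n \<noteq> 0"
proof -
  have "x (Suc n) n \<noteq> 0" if "n \<in> {1..<m}" for n
    using that
  proof (induction n rule: less_induct)
    case (less n)
    show ?case
    proof
      assume "x (Suc n) n = 0"
      moreover have "x (Suc n) l = 0" if "l \<notin> {1..<Suc n}" for l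
        using stair less.prems that unfolding staircase_def by simp
      ultimately have "\<forall>l. l \<notin> {1..<n} \<longrightarrow> x (Suc n) l = 0"
        by (metis atLeastLessThan_iff less_Suc_eq)
      moreover have "staircase n x" using stair less.prems staircase_mono by fastforce
      ultimately obtain c where "\<forall>l. x (Suc n) l = (\<Sum>j\<in>{2..n}. c j * x j l)"
        using staircase_span[of n x "x (Suc n)"] less by auto
      moreover have "\<forall>i\<in>{1..d}. x 1 i = 0" using stair less.prems unfolding staircase_def by auto
      ultimately show False
        using aff_indep_not_in_span[OF aff, of 1 "Suc n" "{2..n}" c] less.prems by fastforce
    qed
  qed
  then show ?thesis by blast
qed

text \<open>Induction on \<open>k\<close>: once \<open>z\<^sub>1, \<dots>, z\<^sub>k\<^sub>-\<^sub>1\<close> vanish, the equations for the pairs \<open>(j, k)\<close>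
  make \<open>z\<^sub>k\<close> orthogonal to \<open>x\<^sub>2, \<dots>, x\<^sub>k\<close>.\<close>
lemma staircase_rigid:
  fixes x z :: "nat \<Rightarrow> nat \<Rightarrow> 'a::idom"
  assumes x: "staircase m x" and pivots: "\<forall>n\<in>{1..<m}. x (Suc n) n \<noteq> 0"
    and z: "staircase m z" and "m \<le> Suc d"
    and edges: "\<forall>j\<in>{1..m}. \<forall>k\<in>{1..m}. (\<Sum>i\<in>{1..d}. (x k i - x j i) * (z k i - z j i)) = 0"
  shows "\<forall>k\<in>{1..m}. \<forall>l. z k l = 0"
proof -
  have "z k l = 0" if "k \<in> {1..m}" for k l
    using that
  proof (induction k arbitrary: l rule: less_induct)
    case (less k)
    have x1: "x 1 i = 0" for i using x less.prems unfolding staircase_def by auto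
    have "(\<Sum>i\<in>{1..d}. (x k i - x j i) * z k i) = 0" if "j \<in> {1..<k}" for j
    proof -
      have "z j i = 0" for i using less.IH[of j] less.prems that by simp
      moreover have "j \<in> {1..m}" using less.prems that by simp
      ultimately show ?thesis using edges[rule_format, of j k] less.prems by simp
    qed
    then have same: "(\<Sum>i\<in>{1..d}. x j i * z k i) = (\<Sum>i\<in>{1..d}. x k i * z k i)"
      if "j \<in> {1..<k}" for j
      using that by (simp add: left_diff_distrib sum_subtractf)
    have "(\<Sum>i\<in>{1..d}. x j i * z k i) = 0" if "j \<in> {2..k}" for j
    proof -
      have "(\<Sum>i\<in>{1..d}. x k i * z k i) = 0" using same[of 1] x1 that by simp
      then show ?thesis using same[of j] that by (cases "j = k") auto
    qed
    moreover have "staircase (Suc (k - 1)) x" using staircase_mono[OF x] less.prems by simp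
    moreover have "\<forall>n\<in>{1..k - 1}. x (Suc n) n \<noteq> 0" using pivots less.prems by auto
    ultimately have "\<forall>l\<in>{1..k - 1}. z k l = 0"
      using staircase_orthogonal[of "k - 1" x d "z k"] less.prems \<open>m \<le> Suc d\<close> by auto
    then show ?case using z less.prems unfolding staircase_def by fastforce
  qed
  then show ?thesis by blast
qed

section \<open>Infinitesimal isometries\<close>

definition inf_isometry :: "nat \<Rightarrow> ((nat \<Rightarrow> 'a) \<Rightarrow> nat \<Rightarrow> 'a::comm_ring) \<Rightarrow> bool" where
  "inf_isometry d T \<longleftrightarrow> (\<forall>x y. (\<Sum>l\<in>{1..d}. (x l - y l) * (T x l - T y l)) = 0)"

text \<open>The skew-symmetric matrix \<open>\<Sum>\<^sub>j\<^sub>>\<^sub>n c\<^sub>j (e\<^sub>j e\<^sub>n\<^sup>T - e\<^sub>n e\<^sub>j\<^sup>T)\<close> applied to \<open>x\<close>.\<close>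
definition inf_rotation :: "nat \<Rightarrow> nat \<Rightarrow> (nat \<Rightarrow> 'a) \<Rightarrow> (nat \<Rightarrow> 'a) \<Rightarrow> nat \<Rightarrow> 'a::comm_ring" where
  "inf_rotation d n c x l = (if n < l \<and> l \<le> d then c l * x n else 0)
     - (if l = n then (\<Sum>j\<in>{n<..d}. c j * x j) else 0)"

lemma inf_isometry_inf_rotation:
  assumes "n \<in> {1..d}"
  shows "inf_isometry d (inf_rotation d n c)"
  unfolding inf_isometry_def
proof (intro allI)
  fix x y :: "nat \<Rightarrow> 'a"
  define D where "D i = x i - y i" for i
  have "inf_rotation d n c x l - inf_rotation d n c y l = inf_rotation d n c D l" for l
    unfolding inf_rotation_def D_def by (simp add: algebra_simps sum_subtractf)
  then have "(\<Sum>l\<in>{1..d}. (x l - y l) * (inf_rotation d n c x l - inf_rotation d n c y l))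
      = (\<Sum>l\<in>{1..d}. D l * inf_rotation d n c D l)"
    by (simp add: D_def)
  also have "\<dots> = (\<Sum>l\<in>{1..d}. (if n < l \<and> l \<le> d then D l * c l * D n else 0))
        - (\<Sum>l\<in>{1..d}. (if l = n then D n * (\<Sum>j\<in>{n<..d}. c j * D j) else 0))"
  proof -
    have "D l * inf_rotation d n c D l = (if n < l \<and> l \<le> d then D l * c l * D n else 0)
        - (if l = n then D n * (\<Sum>j\<in>{n<..d}. c j * D j) else 0)" for l
      unfolding inf_rotation_def by (auto simp: algebra_simps)
    then show ?thesis by (simp only: sum_subtractf)
  qed
  also have "(\<Sum>l\<in>{1..d}. (if n < l \<and> l \<le> d then D l * c l * D n else 0))
      = (\<Sum>l\<in>{n<..d}. D l * c l * D n)"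
    using assms by (intro sum.mono_neutral_cong_right) auto
  also have "(\<Sum>l\<in>{1..d}. (if l = n then D n * (\<Sum>j\<in>{n<..d}. c j * D j) else 0))
      = D n * (\<Sum>j\<in>{n<..d}. c j * D j)"
    using assms by simp
  finally show "(\<Sum>l\<in>{1..d}. (x l - y l) * (inf_rotation d n c x l - inf_rotation d n c y l)) = 0"
    by (simp add: sum_distrib_left algebra_simps)
qed

lemma inf_rotation_eq_0:
  assumes "\<forall>j. n \<le> j \<longrightarrow> x j = 0"
  shows "inf_rotation d n c x l = 0"
  using assms unfolding inf_rotation_def by simp

lemma exists_inf_isometry_staircase:
  fixes x :: "nat \<Rightarrow> nat \<Rightarrow> 'a::field"
  assumes stair: "staircase d x" and pivots: "\<forall>n\<in>{1..<d}. x (Suc n) n \<noteq> 0" and "n < d"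
  shows "\<exists>T. inf_isometry d T \<and> (\<forall>k\<in>{1..n}. \<forall>j\<in>{k..d}. T (x k) j = 0)
    \<and> (\<forall>j\<in>{Suc n..d}. T (x (Suc n)) j = y j)"
proof (cases "n = 0")
  case True
  have "inf_isometry d (\<lambda>_. y)" unfolding inf_isometry_def by simp
  then show ?thesis using True by auto
next
  case False
  define T where "T = inf_rotation d n (\<lambda>j. y j / x (Suc n) n)"
  have "inf_isometry d T" unfolding T_def using False \<open>n < d\<close> by (simp add: inf_isometry_inf_rotation)
  moreover have "T (x k) j = 0" if "k \<in> {1..n}" for k j
    unfolding T_def using stair that \<open>n < d\<close> by (intro inf_rotation_eq_0) (simp add: staircase_def)
  moreover have "T (x (Suc n)) j = y j" if "j \<in> {Suc n..d}" for j
    unfolding T_def inf_rotation_def using pivots that False \<open>n < d\<close> by simp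
  ultimately show ?thesis by blast
qed

section \<open>The rigidity map\<close>

lemma sum_apply: "(\<Sum>a\<in>A. f a) x = (\<Sum>a\<in>A. f a x)"
  by (induction A rule: infinite_finite_induct) auto

definition conf_scale :: "complex \<Rightarrow> ('a \<Rightarrow> nat \<Rightarrow> complex) \<Rightarrow> 'a \<Rightarrow> nat \<Rightarrow> complex" where
  "conf_scale c q = (\<lambda>v l. c * q v l)"

interpretation cs: vector_space "cscale :: complex \<Rightarrow> ('b \<Rightarrow> complex) \<Rightarrow> 'b \<Rightarrow> complex"
  unfolding vector_space_def cscale_def by (auto simp: algebra_simps fun_eq_iff)

interpretation conf: vector_space "conf_scale :: complex \<Rightarrow> ('a \<Rightarrow> nat \<Rightarrow> complex) \<Rightarrow> _"
  unfolding vector_space_def conf_scale_def by (auto simp: algebra_simps fun_eq_iff)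

lemma rigidity_map_edge:
  "(u, v) \<in> E \<Longrightarrow> rigidity_map d E p q (u, v) = (\<Sum>i\<in>{1..d}. (p u i - p v i) * (q u i - q v i))"
  unfolding rigidity_map_def by (auto intro!: sum.cong simp: algebra_simps)

lemma rigidity_map_nonedge: "e \<notin> E \<Longrightarrow> rigidity_map d E p q e = 0"
  unfolding rigidity_map_def by (cases e) auto

lemma linear_rigidity_map: "Vector_Spaces.linear conf_scale cscale (rigidity_map d E p)"
proof -
  have "rigidity_map d E p (q1 + q2) = rigidity_map d E p q1 + rigidity_map d E p q2" for q1 q2
    unfolding rigidity_map_def by (auto simp: fun_eq_iff distrib_left sum.distrib)
  moreover have "rigidity_map d E p (conf_scale c q) = cscale c (rigidity_map d E p q)" for c q
    unfolding rigidity_map_def conf_scale_def cscale_def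
    by (auto simp: fun_eq_iff sum_distrib_left algebra_simps)
  ultimately show ?thesis
    unfolding Vector_Spaces.linear_iff by (simp add: conf.vector_space_axioms cs.vector_space_axioms)
qed

definition trivial_motion :: "nat \<Rightarrow> 'a set \<Rightarrow> ((nat \<Rightarrow> complex) \<Rightarrow> nat \<Rightarrow> complex)
    \<Rightarrow> ('a \<Rightarrow> nat \<Rightarrow> complex) \<Rightarrow> 'a \<Rightarrow> nat \<Rightarrow> complex" where
  "trivial_motion d V T p = (\<lambda>v l. if v \<in> V \<and> l \<in> {1..d} then T (p v) l else 0)"

lemma rigidity_map_trivial_motion:
  assumes "E \<subseteq> V \<times> V" and "inf_isometry d T"
  shows "rigidity_map d E p (trivial_motion d V T p) = 0"
proof
  fix e
  show "rigidity_map d E p (trivial_motion d V T p) e = 0 e"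
  proof (cases e)
    case (Pair u v)
    show ?thesis
    proof (cases "(u, v) \<in> E")
      case True
      then have "u \<in> V" "v \<in> V" using assms(1) by auto
      with True show ?thesis
        using assms(2) unfolding Pair inf_isometry_def
        by (simp add: rigidity_map_edge trivial_motion_def)
    qed (simp add: Pair rigidity_map_nonedge)
  qed
qed

lemma X_space_staircase:
  assumes "q \<in> X_space d V vs" and "\<forall>k\<in>{1..d}. ws k = vs k"
  shows "staircase (Suc d) (\<lambda>k. q (ws k))"
  unfolding staircase_def
proof (intro ballI allI impI)
  fix k j assume k: "k \<in> {1..Suc d}" and j: "j \<notin> {1..<k}"
  show "q (ws k) j = 0"
  proof (cases "k \<le> d \<and> j \<in> {1..d}")
    case True
    then show ?thesis using assms j k unfolding X_space_def by auto
  next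
    case False
    then have "j \<notin> {1..d}" using k j by auto
    then show ?thesis using assms(1) unfolding X_space_def conf_space_def by auto
  qed
qed

lemma rigidity_map_image_X_space:
  assumes E: "E \<subseteq> V \<times> V" and vs: "vs ` {1..d} \<subseteq> V"
    and stair: "staircase d (\<lambda>k. p (vs k))" and pivots: "\<forall>n\<in>{1..<d}. p (vs (Suc n)) n \<noteq> 0"
  shows "rigidity_map d E p ` X_space d V vs = rigidity_map d E p ` conf_space d V"
proof
  show "rigidity_map d E p ` X_space d V vs \<subseteq> rigidity_map d E p ` conf_space d V"
    unfolding X_space_def by auto
next
  interpret R: Vector_Spaces.linear conf_scale cscale "rigidity_map d E p" by (rule linear_rigidity_map)
  have "\<exists>q'\<in>conf_space d V. rigidity_map d E p q' = rigidity_map d E p q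
      \<and> (\<forall>k\<in>{1..n}. \<forall>j\<in>{k..d}. q' (vs k) j = 0)"
    if q: "q \<in> conf_space d V" and "n \<le> d" for q n
    using \<open>n \<le> d\<close>
  proof (induction n)
    case 0
    then show ?case using q by auto
  next
    case (Suc n)
    then obtain q' where q': "q' \<in> conf_space d V" "rigidity_map d E p q' = rigidity_map d E p q"
      and zero: "\<forall>k\<in>{1..n}. \<forall>j\<in>{k..d}. q' (vs k) j = 0" by auto
    obtain T where T: "inf_isometry d T" "\<forall>k\<in>{1..n}. \<forall>j\<in>{k..d}. T (p (vs k)) j = 0"
      "\<forall>j\<in>{Suc n..d}. T (p (vs (Suc n))) j = q' (vs (Suc n)) j"
      using exists_inf_isometry_staircase[OF stair pivots, of n "q' (vs (Suc n))"] Suc.prems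
      by auto
    define q'' where "q'' = q' - trivial_motion d V T p"
    have "q'' \<in> conf_space d V"
      using q'(1) unfolding q''_def conf_space_def trivial_motion_def by auto
    moreover have "rigidity_map d E p q'' = rigidity_map d E p q"
      using q'(2) rigidity_map_trivial_motion[OF E T(1)] unfolding q''_def by (simp add: R.diff)
    moreover have "q'' (vs k) j = 0" if "k \<in> {1..Suc n}" "j \<in> {k..d}" for k j
    proof -
      have "vs k \<in> V" using vs that Suc.prems by auto
      then show ?thesis
        using that zero T(2,3) unfolding q''_def trivial_motion_def
        by (cases "k = Suc n") auto
    qed
    ultimately show ?case by blast
  qed
  then show "rigidity_map d E p ` conf_space d V \<subseteq> rigidity_map d E p ` X_space d V vs"
    unfolding X_space_def by (force simp: image_iff)
qed

section \<open>Coordinate subspaces\<close>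

definition coord_vec :: "'a \<times> nat \<Rightarrow> 'a \<Rightarrow> nat \<Rightarrow> complex" where
  "coord_vec a v l = (if (v, l) = a then 1 else 0)"

lemma inj_coord_vec: "inj coord_vec"
  by (rule injI) (metis coord_vec_def one_neq_zero surj_pair)

lemma sum_coord_vec:
  assumes "finite A"
  shows "(\<Sum>a\<in>A. conf_scale (u a) (coord_vec a)) v l = (if (v, l) \<in> A then u (v, l) else 0)"
  using assms by (simp add: sum_apply conf_scale_def coord_vec_def if_distrib cong: if_cong)

lemma span_coord_vec:
  assumes "finite A"
  shows "conf.span (coord_vec ` A) = {q. \<forall>v l. (v, l) \<notin> A \<longrightarrow> q v l = 0}" (is "_ = ?S")
proof
  have "conf.subspace ?S"
    unfolding conf.subspace_def by (simp add: conf_scale_def)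
  moreover have "coord_vec ` A \<subseteq> ?S" by (auto simp: coord_vec_def)
  ultimately show "conf.span (coord_vec ` A) \<subseteq> ?S" by (simp add: conf.span_minimal)
next
  show "?S \<subseteq> conf.span (coord_vec ` A)"
  proof
    fix q assume "q \<in> ?S"
    then have "q = (\<Sum>a\<in>A. conf_scale (q (fst a) (snd a)) (coord_vec a))"
      using assms by (auto simp: fun_eq_iff sum_coord_vec)
    also have "\<dots> \<in> conf.span (coord_vec ` A)"
      by (intro conf.span_sum conf.span_scale conf.span_base) auto
    finally show "q \<in> conf.span (coord_vec ` A)" .
  qed
qed

lemma independent_coord_vec:
  assumes "finite A"
  shows "conf.independent (coord_vec ` A)"
proof
  assume "conf.dependent (coord_vec ` A)"
  then obtain u where u: "\<exists>b\<in>coord_vec ` A. u b \<noteq> 0"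
    and "(\<Sum>b\<in>coord_vec ` A. conf_scale (u b) b) = 0"
    using conf.dependent_finite assms by blast
  then have "(\<Sum>a\<in>A. conf_scale (u (coord_vec a)) (coord_vec a)) = 0"
    by (simp add: sum.reindex inj_on_subset[OF inj_coord_vec])
  then have "u (coord_vec a) = 0" if "a \<in> A" for a
    using sum_coord_vec[OF assms, of "\<lambda>a. u (coord_vec a)" "fst a" "snd a"] that by simp
  then show False using u by blast
qed

lemma rank_on_coordinate_subspace:
  assumes "finite A" and S: "S = {q. \<forall>v l. (v, l) \<notin> A \<longrightarrow> q v l = 0}"
    and inj: "inj_on (rigidity_map d E p) S"
  shows "rank_on d E p S = card A"
proof -
  interpret R: Vector_Spaces.linear conf_scale cscale "rigidity_map d E p"
    by (rule linear_rigidity_map)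
  define B where "B = coord_vec ` A"
  have span: "conf.span B = S" unfolding B_def S using span_coord_vec[OF assms(1)] .
  have "rigidity_map d E p ` S = cs.span (rigidity_map d E p ` B)"
    unfolding span[symmetric] by (rule R.span_image[symmetric])
  moreover have "cs.independent (rigidity_map d E p ` B)"
    using R.independent_injective_image independent_coord_vec[OF assms(1)] inj span
    unfolding B_def by auto
  moreover have "card (rigidity_map d E p ` B) = card A"
  proof -
    have "B \<subseteq> S" using span conf.span_superset by blast
    then have "card (rigidity_map d E p ` B) = card B" using inj by (simp add: card_image inj_on_subset)
    then show ?thesis unfolding B_def by (simp add: card_image inj_on_subset[OF inj_coord_vec])
  qed
  ultimately show ?thesis unfolding rank_on_def by (simp add: cs.dim_eq_card_independent)
qed

definition free_coords :: "nat \<Rightarrow> 'a set \<Rightarrow> (nat \<Rightarrow> 'a) \<Rightarrow> ('a \<times> nat) set" where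
  "free_coords d V vs = V \<times> {1..d} - {(vs k, j) | k j. 1 \<le> k \<and> k \<le> j \<and> j \<le> d}"

lemma X_space_eq_free_coords:
  "X_space d V vs = {q. \<forall>v l. (v, l) \<notin> free_coords d V vs \<longrightarrow> q v l = 0}"
  unfolding X_space_def conf_space_def free_coords_def by auto

lemma finite_free_coords: "finite V \<Longrightarrow> finite (free_coords d V vs)"
  unfolding free_coords_def by simp

lemma card_le_pairs: "card {(k, j). 1 \<le> k \<and> k \<le> j \<and> j \<le> (n::nat)} = (n + 1) choose 2"
proof (induction n)
  case 0
  have "{(k, j). 1 \<le> k \<and> k \<le> j \<and> j \<le> (0::nat)} = {}" by auto
  then show ?case by (subst \<open>_ = {}\<close>) simp
next
  case (Suc n)
  have "{(k, j). 1 \<le> k \<and> k \<le> j \<and> j \<le> Suc n}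
      = {(k, j). 1 \<le> k \<and> k \<le> j \<and> j \<le> n} \<union> (\<lambda>k. (k, Suc n)) ` {1..Suc n}"
    by auto
  moreover have "finite {(k, j). 1 \<le> k \<and> k \<le> j \<and> j \<le> n}"
    by (rule finite_subset[of _ "{1..n} \<times> {1..n}"]) auto
  moreover have "{(k, j). 1 \<le> k \<and> k \<le> j \<and> j \<le> n} \<inter> (\<lambda>k. (k, Suc n)) ` {1..Suc n} = {}"
    by auto
  moreover have "card ((\<lambda>k. (k, Suc n)) ` {1..Suc n}) = Suc n"
    by (simp add: card_image inj_on_def)
  ultimately have "card {(k, j). 1 \<le> k \<and> k \<le> j \<and> j \<le> Suc n} = ((n + 1) choose 2) + Suc n"
    using Suc.IH by (simp add: card_Un_disjoint)
  then show ?case by (simp add: numeral_2_eq_2)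
qed

lemma card_free_coords:
  assumes "finite V" and inj: "inj_on vs {1..d}" and "vs ` {1..d} \<subseteq> V"
  shows "int (card (free_coords d V vs)) = int d * int (card V) - int ((d + 1) choose 2)"
proof -
  let ?P = "{(k, j). 1 \<le> k \<and> k \<le> j \<and> j \<le> d}"
  let ?B = "{(vs k, j) | k j. 1 \<le> k \<and> k \<le> j \<and> j \<le> d}"
  have "?B = (\<lambda>(k, j). (vs k, j)) ` ?P" by (auto simp: image_iff)
  moreover have "inj_on (\<lambda>(k, j). (vs k, j)) ?P"
  proof (rule inj_onI)
    fix a b assume "a \<in> ?P" "b \<in> ?P" "(\<lambda>(k, j). (vs k, j)) a = (\<lambda>(k, j). (vs k, j)) b"
    then show "a = b" by (cases a; cases b) (auto dest: inj_onD[OF inj])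
  qed
  ultimately have "card ?B = card ?P" by (simp only: card_image)
  then have card_B: "card ?B = (d + 1) choose 2" by (simp only: card_le_pairs)
  have sub: "?B \<subseteq> V \<times> {1..d}" using assms(3) by auto
  have fin: "finite (V \<times> {1..d})" using assms(1) by simp
  have "card ?B \<le> card V * d"
    using card_mono[OF fin sub] by (simp add: card_cartesian_product)
  moreover have "card (free_coords d V vs) = card V * d - card ?B"
    unfolding free_coords_def
    using card_Diff_subset[OF finite_subset[OF sub fin] sub] by (simp add: card_cartesian_product)
  ultimately show ?thesis using card_B by (simp add: of_nat_diff algebra_simps)
qed

section \<open>Complete graphs\<close>

lemma aff_indep_reindex:
  assumes "bij_betw f S T" and "aff_indep d T x"
  shows "aff_indep d S (\<lambda>s. x (f s))"
  unfolding aff_indep_def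
proof (intro allI impI ballI)
  fix c :: "_ \<Rightarrow> complex" and s
  assume c: "sum c S = 0 \<and> (\<forall>i\<in>{1..d}. (\<Sum>s\<in>S. c s * x (f s) i) = 0)" and "s \<in> S"
  define c' where "c' = (\<lambda>t. c (the_inv_into S f t))"
  have c'f: "c' (f s) = c s" if "s \<in> S" for s
    using assms(1) that unfolding c'_def bij_betw_def by (simp add: the_inv_into_f_f)
  have "(\<Sum>t\<in>T. g t) = (\<Sum>s\<in>S. g (f s))" for g :: "_ \<Rightarrow> complex"
    using sum.reindex_bij_betw[OF assms(1)] by metis
  then have "sum c' T = 0 \<and> (\<forall>i\<in>{1..d}. (\<Sum>t\<in>T. c' t * x t i) = 0)"
    using c c'f by simp
  then have "c' (f s) = 0"
    using assms \<open>s \<in> S\<close> unfolding aff_indep_def bij_betw_def by blast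
  then show "c s = 0" using c'f \<open>s \<in> S\<close> by simp
qed

lemma bij_betw_extension:
  assumes "finite V" and "card V = Suc d" and inj: "inj_on vs {1..d}" and "vs ` {1..d} \<subseteq> V"
  obtains w where "bij_betw (vs(Suc d := w)) {1..Suc d} V"
proof -
  have "card (vs ` {1..d}) = d" using inj by (simp add: card_image)
  then have "vs ` {1..d} \<noteq> V" using assms(2) by auto
  then obtain w where w: "w \<in> V - vs ` {1..d}" using assms(4) by blast
  let ?ws = "vs(Suc d := w)"
  have ws: "{1..Suc d} = insert (Suc d) {1..d}" "?ws ` {1..d} = vs ` {1..d}"
    by auto
  have "inj_on ?ws {1..d}" using inj inj_on_cong[of "{1..d}" ?ws vs] by simp
  then have "inj_on ?ws {1..Suc d}" unfolding ws(1) using w ws(2) by simp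
  moreover have "?ws ` {1..Suc d} = V"
  proof (rule card_subset_eq[OF assms(1)])
    show "?ws ` {1..Suc d} \<subseteq> V" using w assms(4) ws by auto
    show "card (?ws ` {1..Suc d}) = card V"
      using card_image[OF calculation] assms(2) by simp
  qed
  ultimately show ?thesis using that unfolding bij_betw_def by blast
qed

lemma rigidity_map_complete_graph_eq_0:
  assumes "complete_graph V E" and "rigidity_map d E p q = 0" and "u \<in> V" and "v \<in> V"
  shows "(\<Sum>i\<in>{1..d}. (p u i - p v i) * (q u i - q v i)) = 0"
proof (cases "u = v")
  case False
  then consider "(u, v) \<in> E" | "(v, u) \<in> E"
    using assms(1,3,4) unfolding complete_graph_def by blast
  then show ?thesis
  proof cases
    case 1
    then show ?thesis using assms(2) rigidity_map_edge[of u v E d p q] by simp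
  next
    case 2
    have "(\<Sum>i\<in>{1..d}. (p u i - p v i) * (q u i - q v i))
        = (\<Sum>i\<in>{1..d}. (p v i - p u i) * (q v i - q u i))"
      by (simp add: algebra_simps)
    then show ?thesis using 2 assms(2) rigidity_map_edge[of v u E d p q] by simp
  qed
qed simp

lemma inj_on_rigidity_map_complete_graph:
  assumes K: "complete_graph V E" and "finite V" and "card V = Suc d"
    and "inj_on vs {1..d}" and "vs ` {1..d} \<subseteq> V" and p: "p \<in> X_space d V vs"
    and aff: "aff_indep d V p"
  shows "inj_on (rigidity_map d E p) (X_space d V vs)"
proof -
  interpret R: Vector_Spaces.linear conf_scale cscale "rigidity_map d E p"
    by (rule linear_rigidity_map)
  obtain w where bij: "bij_betw (vs(Suc d := w)) {1..Suc d} V"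
    using bij_betw_extension assms(2-5) by blast
  define ws where "ws = vs(Suc d := w)"
  have ws_vs: "\<forall>k\<in>{1..d}. ws k = vs k" unfolding ws_def by simp
  have stair: "staircase (Suc d) (\<lambda>k. p (ws k))" using X_space_staircase[OF p ws_vs] .
  have pivots: "\<forall>n\<in>{1..<Suc d}. p (ws (Suc n)) n \<noteq> 0"
    using aff_indep_staircase_pivots[OF stair aff_indep_reindex[OF bij[folded ws_def] aff]] .
  have "q = 0" if q: "q \<in> X_space d V vs" and Rq: "rigidity_map d E p q = 0" for q
  proof -
    have "ws ` {1..Suc d} = V" using bij unfolding ws_def bij_betw_def by simp
    then have "\<forall>j\<in>{1..Suc d}. \<forall>k\<in>{1..Suc d}.
        (\<Sum>i\<in>{1..d}. (p (ws k) i - p (ws j) i) * (q (ws k) i - q (ws j) i)) = 0"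
      using rigidity_map_complete_graph_eq_0[OF K Rq] by blast
    then have "\<forall>k\<in>{1..Suc d}. \<forall>l. q (ws k) l = 0"
      using staircase_rigid[OF stair pivots X_space_staircase[OF q ws_vs], of d] by simp
    moreover have "q v l = 0" if "v \<notin> V" for v l
      using q that unfolding X_space_def conf_space_def by simp
    ultimately have "q v l = 0" for v l
      using \<open>ws ` {1..Suc d} = V\<close> by (cases "v \<in> V") auto
    then show "q = 0" by (simp add: fun_eq_iff)
  qed
  moreover have "conf.subspace (X_space d V vs)"
    unfolding X_space_eq_free_coords span_coord_vec[OF finite_free_coords[OF assms(2)], symmetric]
    by (rule conf.subspace_span)
  ultimately show ?thesis by (simp add: R.inj_on_iff_eq_0)
qed

theorem lemma2p6:
  fixes d :: nat and V :: "'a set" and E :: "('a \<times> 'a) set"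
    and vs :: "nat \<Rightarrow> 'a" and p :: "'a \<Rightarrow> nat \<Rightarrow> complex"
  assumes "simple_graph V E"
    and "card V \<ge> d + 1"
    and "inj_on vs {1..d}" and "vs ` {1..d} \<subseteq> V"
    and "p \<in> X_space d V vs"
    and "aff_indep d {1..d} (\<lambda>k. p (vs k))"
  shows "int (rank_on d E p (X_space d V vs)) = int d * int (card V) - int ((d + 1) choose 2)
    \<longleftrightarrow> inf_rigid d V E p"
proof -
  have fin: "finite V" and E: "E \<subseteq> V \<times> V" using assms(1) unfolding simple_graph_def by auto
  have "staircase (Suc d) (\<lambda>k. p (vs k))" using X_space_staircase[OF assms(5), of vs] by simp
  then have stair: "staircase d (\<lambda>k. p (vs k))" by (rule staircase_mono) simp
  then have pivots: "\<forall>n\<in>{1..<d}. p (vs (Suc n)) n \<noteq> 0"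
    using aff_indep_staircase_pivots assms(6) by blast
  have same_rank: "rank_on d E p (X_space d V vs) = rank_on d E p (conf_space d V)"
    unfolding rank_on_def using rigidity_map_image_X_space[OF E assms(4) stair pivots] by simp
  have "int (rank_on d E p (X_space d V vs)) = int d * int (card V) - int ((d + 1) choose 2)"
    if "complete_graph V E" "card V \<le> d + 1" "aff_indep d V p"
  proof -
    have "card V = Suc d" using that(2) assms(2) by simp
    then have "inj_on (rigidity_map d E p) (X_space d V vs)"
      using inj_on_rigidity_map_complete_graph[OF that(1) fin _ assms(3-5) that(3)] by simp
    then have "rank_on d E p (X_space d V vs) = card (free_coords d V vs)"
      by (rule rank_on_coordinate_subspace[OF finite_free_coords[OF fin] X_space_eq_free_coords])
    then show ?thesis using card_free_coords[OF fin assms(3,4)] by simp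
  qed
  then show ?thesis unfolding inf_rigid_def using same_rank by auto
qed

end
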